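(* Let $k\ge1$ and let $G$ be a finite $k$-connected graph with $|V_G|\ge k+1$. If $\mathrm{Ent}(G)=k$, then $\mathrm{Cycl}(G)=\mathrm{Ent}(G)=k$.
   Context: Graphs are finite and undirected. A graph is $k$-connected if one must remove at least $k$ vertices to disconnect it (by convention $K_m$, $m\ge3$, has connectivity $m-1$). $\mathrm{Cycl}(G)$ (cyclicity) is the minimum size of a feedback vertex set of the symmetric digraph of $G$ (each edge viewed as two opposite arcs); equivalently the minimum size of a set of vertices containing an endpoint of every edge. Entanglement: in the game $\mathrm{Ent}(G,k)$ Thief plays against $k$ cops. Initially no cop is placed and Thief picks a vertex. Each round, Cops may do nothing, place a new cop (at most $k$ in total) on Thief's current vertex, or move a placed cop to Thief's current vertex; then Thief must move along an edge to an adjacent vertex not occupied by a cop, and is caught if he cannot. Infinite plays are won by Thief. $\mathrm{Ent}(G)$ is the least $k$ for which Cops have a winning strategy. *)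

theory Defs
  imports Main
begin

definition graph :: "'a set \<Rightarrow> ('a \<Rightarrow> 'a \<Rightarrow> bool) \<Rightarrow> bool" where
  "graph V E \<longleftrightarrow> finite V \<and>
     (\<forall>u v. E u v \<longrightarrow> u \<in> V \<and> v \<in> V \<and> u \<noteq> v \<and> E v u)"

definition induced :: "'a set \<Rightarrow> ('a \<Rightarrow> 'a \<Rightarrow> bool) \<Rightarrow> 'a \<Rightarrow> 'a \<Rightarrow> bool" where
  "induced W E = (\<lambda>x y. E x y \<and> x \<in> W \<and> y \<in> W)"

definition connected_graph :: "'a set \<Rightarrow> ('a \<Rightarrow> 'a \<Rightarrow> bool) \<Rightarrow> bool" where
  "connected_graph V E \<longleftrightarrow> V \<noteq> {} \<and>
     (\<forall>u\<in>V. \<forall>v\<in>V. (induced V E)\<^sup>*\<^sup>* u v)"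

text \<open>k-connected: more than k vertices, and removing fewer than k vertices
  leaves a connected graph (so K_m has connectivity m-1).\<close>
definition k_connected :: "nat \<Rightarrow> 'a set \<Rightarrow> ('a \<Rightarrow> 'a \<Rightarrow> bool) \<Rightarrow> bool" where
  "k_connected k V E \<longleftrightarrow> card V > k \<and>
     (\<forall>S. S \<subseteq> V \<and> card S < k \<longrightarrow> connected_graph (V - S) (induced (V - S) E))"

text \<open>Feedback vertex set of the symmetric digraph of G (each edge = two
  opposite arcs): removing S leaves no directed cycle.\<close>
definition feedback_vertex_set :: "'a set \<Rightarrow> ('a \<Rightarrow> 'a \<Rightarrow> bool) \<Rightarrow> 'a set \<Rightarrow> bool" where
  "feedback_vertex_set V E S \<longleftrightarrow> S \<subseteq> V \<and>
     \<not> (\<exists>v. (induced (V - S) E)\<^sup>+\<^sup>+ v v)"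

definition cycl :: "'a set \<Rightarrow> ('a \<Rightarrow> 'a \<Rightarrow> bool) \<Rightarrow> nat" where
  "cycl V E = (LEAST n. \<exists>S. feedback_vertex_set V E S \<and> card S = n)"

definition cop_move :: "nat \<Rightarrow> 'a \<Rightarrow> 'a set \<Rightarrow> 'a set \<Rightarrow> bool" where
  "cop_move k v C C' \<longleftrightarrow>
     C' = C \<or> (card C < k \<and> C' = insert v C) \<or> (\<exists>c\<in>C. C' = insert v (C - {c}))"

text \<open>A Cops' strategy maps the history of Thief positions v_0 ... v_i to the
  cop positions after the Cops' move in round i ([] gives the initial empty
  placement). It must always prescribe legal moves.\<close>
definition legal_cop_strategy :: "nat \<Rightarrow> 'a set \<Rightarrow> ('a list \<Rightarrow> 'a set) \<Rightarrow> bool" where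
  "legal_cop_strategy k V \<sigma> \<longleftrightarrow> \<sigma> [] = {} \<and>
     (\<forall>xs v. v \<in> V \<and> v \<notin> \<sigma> xs \<longrightarrow> cop_move k v (\<sigma> xs) (\<sigma> (xs @ [v])))"

definition thief_escapes :: "'a set \<Rightarrow> ('a \<Rightarrow> 'a \<Rightarrow> bool) \<Rightarrow> ('a list \<Rightarrow> 'a set) \<Rightarrow> (nat \<Rightarrow> 'a) \<Rightarrow> bool" where
  "thief_escapes V E \<sigma> f \<longleftrightarrow> f 0 \<in> V \<and>
     (\<forall>i. E (f i) (f (Suc i)) \<and> f (Suc i) \<notin> \<sigma> (map f [0..<Suc i]))"

definition cops_win :: "nat \<Rightarrow> 'a set \<Rightarrow> ('a \<Rightarrow> 'a \<Rightarrow> bool) \<Rightarrow> bool" where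
  "cops_win k V E \<longleftrightarrow>
     (\<exists>\<sigma>. legal_cop_strategy k V \<sigma> \<and> (\<forall>f. \<not> thief_escapes V E \<sigma> f))"

definition ent :: "'a set \<Rightarrow> ('a \<Rightarrow> 'a \<Rightarrow> bool) \<Rightarrow> nat" where
  "ent V E = (LEAST k. cops_win k V E)"

end

theory Submission
  imports Defs
begin

text \<open>A feedback vertex set of the symmetric digraph is exactly a vertex cover, since every
  edge yields a 2-cycle. So if Cycl(G) > k, an edge survives the removal of any k vertices,
  and Thief beats k cops by always standing on a vertex with a free neighbour: when a cop
  lands on him, the other at most k - 1 cops do not disconnect G, so a path leads from his
  vertex to a surviving edge, and its first two steps are free. Conversely, deleting fewer
  than k vertices of a k-connected graph leaves a connected graph on at least two vertices,
  which contains an edge; so Cycl(G) \<ge> k.\<close>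

lemma induced_induced [simp]: "induced W (induced W E) = induced W E"
  unfolding induced_def by auto

lemma feedback_vertex_set_iff_no_edge:
  assumes "graph V E"
  shows "feedback_vertex_set V E S \<longleftrightarrow>
           S \<subseteq> V \<and> \<not> (\<exists>a b. E a b \<and> a \<in> V - S \<and> b \<in> V - S)"
proof -
  have "(\<exists>v. (induced (V - S) E)\<^sup>+\<^sup>+ v v) \<longleftrightarrow> (\<exists>a b. E a b \<and> a \<in> V - S \<and> b \<in> V - S)"
  proof
    assume "\<exists>v. (induced (V - S) E)\<^sup>+\<^sup>+ v v"
    then obtain v c where "induced (V - S) E v c" by (metis tranclpD)
    then show "\<exists>a b. E a b \<and> a \<in> V - S \<and> b \<in> V - S" unfolding induced_def by blast
  next
    assume "\<exists>a b. E a b \<and> a \<in> V - S \<and> b \<in> V - S"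
    then obtain a b where "induced (V - S) E a b" "induced (V - S) E b a"
      using assms unfolding induced_def graph_def by blast
    then have "(induced (V - S) E)\<^sup>+\<^sup>+ a a" by (meson tranclp.r_into_trancl tranclp.trancl_into_trancl)
    then show "\<exists>v. (induced (V - S) E)\<^sup>+\<^sup>+ v v" by blast
  qed
  then show ?thesis unfolding feedback_vertex_set_def by blast
qed

lemma cycl_le_card:
  assumes "feedback_vertex_set V E S"
  shows "cycl V E \<le> card S"
  unfolding cycl_def by (rule Least_le) (use assms in blast)

lemma cycl_attained: "\<exists>S. feedback_vertex_set V E S \<and> card S = cycl V E"
proof -
  have "feedback_vertex_set V E V"
    unfolding feedback_vertex_set_def induced_def by (auto dest: tranclpD)
  show ?thesis unfolding cycl_def by (rule LeastI_ex) (use \<open>feedback_vertex_set V E V\<close> in blast)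
qed

lemma k_connected_le_cycl:
  assumes g: "graph V E" and kc: "k_connected k V E"
  shows "k \<le> cycl V E"
proof (rule ccontr)
  assume "\<not> k \<le> cycl V E"
  have fin: "finite V" using g unfolding graph_def by blast
  obtain S where F: "feedback_vertex_set V E S" and cS: "card S = cycl V E"
    using cycl_attained by blast
  have SV: "S \<subseteq> V" using F unfolding feedback_vertex_set_def by blast
  have "card S < k" using \<open>\<not> k \<le> cycl V E\<close> cS by simp
  then have conn: "connected_graph (V - S) (induced (V - S) E)"
    using kc SV unfolding k_connected_def by blast
  have "card (V - S) = card V - card S" using SV fin by (simp add: card_Diff_subset finite_subset)
  then have "card (V - S) \<ge> 2" using \<open>card S < k\<close> kc unfolding k_connected_def by linarith
  then obtain u v where uv: "u \<in> V - S" "v \<in> V - S" "u \<noteq> v"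
    using card_le_Suc0_iff_eq[of "V - S"] fin by fastforce
  then have "(induced (V - S) E)\<^sup>*\<^sup>* u v"
    using conn unfolding connected_graph_def by simp
  then obtain w where "induced (V - S) E u w"
    using uv(3) by (metis converse_rtranclpE)
  then show False
    using F g unfolding feedback_vertex_set_iff_no_edge[OF g] induced_def by blast
qed

lemma edge_outside_small_set:
  assumes g: "graph V E" and "k < cycl V E" and "S \<subseteq> V" and "card S \<le> k"
  shows "\<exists>a b. E a b \<and> a \<in> V - S \<and> b \<in> V - S"
proof -
  have "\<not> feedback_vertex_set V E S" using assms(2,4) cycl_le_card by fastforce
  then show ?thesis using assms(3) unfolding feedback_vertex_set_iff_no_edge[OF g] by blast
qed

lemma cop_move_card_le:
  assumes "finite C" "card C \<le> k" "cop_move k v C C'"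
  shows "finite C' \<and> card C' \<le> k \<and> (C' = C \<or> v \<in> C')"
proof -
  consider "C' = C" | "card C < k" "C' = insert v C" | c where "c \<in> C" "C' = insert v (C - {c})"
    using assms(3) unfolding cop_move_def by blast
  then show ?thesis
  proof cases
    case 3
    then have "card C' \<le> Suc (card C - 1)" "card C > 0"
      using assms(1) card_gt_0_iff by (auto simp: card_insert_if card_Diff_singleton)
    then show ?thesis using 3 assms(1,2) by simp
  qed (use assms in \<open>simp_all add: card_insert_if\<close>)
qed

lemma trapped_component:
  assumes trap: "\<And>y z. E x y \<Longrightarrow> y \<notin> C \<Longrightarrow> E y z \<Longrightarrow> z \<in> C"
    and avoid: "W \<inter> C \<subseteq> {x}"
    and path: "(induced W E)\<^sup>*\<^sup>* x w"
  shows "w = x \<or> (E x w \<and> w \<notin> C)"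
  using path
proof (induction rule: rtranclp_induct)
  case (step y w)
  then have "E y w" "w \<in> W" unfolding induced_def by auto
  with step.IH show ?case using trap avoid by blast
qed simp

lemma thief_safe_move:
  assumes g: "graph V E" and kc: "k_connected k V E"
    and cycl: "k < cycl V E"
    and xV: "x \<in> V" and fin: "finite C" and cardC: "card C \<le> k"
    and safe: "x \<in> C \<or> (\<exists>z. E x z \<and> z \<notin> C)"
  shows "\<exists>y. E x y \<and> y \<notin> C \<and> (\<exists>z. E y z \<and> z \<notin> C)"
proof (cases "x \<in> C")
  case False
  then obtain z where "E x z" "z \<notin> C" using safe by blast
  then show ?thesis using False g unfolding graph_def by blast
next
  case True
  show ?thesis
  proof (rule ccontr)
    assume "\<not> ?thesis"
    then have trap: "\<And>y z. E x y \<Longrightarrow> y \<notin> C \<Longrightarrow> E y z \<Longrightarrow> z \<in> C" by blast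
    have "card (C \<inter> V) \<le> k" using fin cardC by (meson card_mono inf_le1 le_trans)
    then obtain a b where ab: "E a b" "a \<in> V - C" "b \<in> V - C"
      using edge_outside_small_set[OF g cycl, of "C \<inter> V"] by blast
    define S where "S = C \<inter> V - {x}"
    have "x \<in> C \<inter> V" using True xV by blast
    then have "card S < card (C \<inter> V)" unfolding S_def using fin by (simp only: card_Diff1_less_iff) simp
    then have "card S < k" using \<open>card (C \<inter> V) \<le> k\<close> by linarith
    moreover have "S \<subseteq> V" unfolding S_def by blast
    ultimately have "connected_graph (V - S) (induced (V - S) E)"
      using kc unfolding k_connected_def by blast
    moreover have "x \<in> V - S" "a \<in> V - S" using xV ab unfolding S_def by blast+
    ultimately have path: "(induced (V - S) E)\<^sup>*\<^sup>* x a"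
      unfolding connected_graph_def by simp
    have avoid: "(V - S) \<inter> C \<subseteq> {x}" unfolding S_def by blast
    have "a = x \<or> (E x a \<and> a \<notin> C)"
      by (rule trapped_component[OF trap avoid path])
    then show False using ab True trap by blast
  qed
qed

lemma play_of_choice:
  "\<exists>f. f 0 = a \<and> (\<forall>i. f (Suc i) = ch (f i) (\<sigma> (map f [0..<Suc i])))"
proof -
  define h where "h = rec_nat [a] (\<lambda>n xs. xs @ [ch (last xs) (\<sigma> xs)])"
  define f where "f i = last (h i)" for i
  have h0: "h 0 = [a]" unfolding h_def by simp
  have hS: "h (Suc n) = h n @ [ch (f n) (\<sigma> (h n))]" for n
    unfolding h_def f_def by simp
  have hf: "h n = map f [0..<Suc n]" for n
  proof (induction n)
    case 0
    then show ?case using h0 unfolding f_def by simp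
  next
    case (Suc n)
    have "h (Suc n) = h n @ [f (Suc n)]" unfolding f_def by (simp add: hS)
    then show ?case using Suc.IH by simp
  qed
  have "f (Suc i) = ch (f i) (\<sigma> (map f [0..<Suc i]))" for i
    unfolding f_def[of "Suc i"] hS hf[symmetric] by simp
  moreover have "f 0 = a" unfolding f_def h0 by simp
  ultimately show ?thesis by blast
qed

lemma not_cops_win_if_cycl_gt:
  assumes g: "graph V E" and kc: "k_connected k V E" and cycl: "k < cycl V E"
  shows "\<not> cops_win k V E"
proof
  assume "cops_win k V E"
  then obtain \<sigma> where leg: "legal_cop_strategy k V \<sigma>" and caught: "\<And>f. \<not> thief_escapes V E \<sigma> f"
    unfolding cops_win_def by blast
  obtain a b where ab: "E a b" "a \<in> V" "b \<in> V"
    using edge_outside_small_set[OF g cycl, of "{}"] by auto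
  define ch where "ch x C = (SOME y. E x y \<and> y \<notin> C \<and> (\<exists>z. E y z \<and> z \<notin> C))" for x C
  obtain f where f0: "f 0 = a" and fS: "\<And>i. f (Suc i) = ch (f i) (\<sigma> (map f [0..<Suc i]))"
    using play_of_choice[of a ch \<sigma>] by blast
  define inv where "inv i \<longleftrightarrow> f i \<in> V \<and> f i \<notin> \<sigma> (map f [0..<i]) \<and>
      finite (\<sigma> (map f [0..<i])) \<and> card (\<sigma> (map f [0..<i])) \<le> k \<and>
      (\<exists>z. E (f i) z \<and> z \<notin> \<sigma> (map f [0..<i]))" for i
  have round: "E (f i) (f (Suc i)) \<and> f (Suc i) \<notin> \<sigma> (map f [0..<Suc i]) \<and> inv (Suc i)"
    if "inv i" for i
  proof -
    define C where "C = \<sigma> (map f [0..<i])"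
    define C' where "C' = \<sigma> (map f [0..<Suc i])"
    have I: "f i \<in> V" "f i \<notin> C" "finite C" "card C \<le> k" "\<exists>z. E (f i) z \<and> z \<notin> C"
      using that unfolding inv_def C_def by simp_all
    have "C' = \<sigma> (map f [0..<i] @ [f i])" unfolding C'_def by simp
    then have "cop_move k (f i) C C'"
      using leg I(1,2) unfolding legal_cop_strategy_def C_def by simp
    then have C': "finite C'" "card C' \<le> k" "C' = C \<or> f i \<in> C'"
      using cop_move_card_le[OF I(3,4)] by simp_all
    have "f i \<in> C' \<or> (\<exists>z. E (f i) z \<and> z \<notin> C')"
      using C'(3) I(5) by blast
    then have "\<exists>y. E (f i) y \<and> y \<notin> C' \<and> (\<exists>z. E y z \<and> z \<notin> C')"
      by (rule thief_safe_move[OF g kc cycl I(1) C'(1,2)])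
    then have next_move: "E (f i) (f (Suc i)) \<and> f (Suc i) \<notin> C' \<and> (\<exists>z. E (f (Suc i)) z \<and> z \<notin> C')"
      unfolding fS ch_def C'_def[symmetric] by (rule someI_ex)
    then have "f (Suc i) \<in> V" using g unfolding graph_def by blast
    with next_move C'(1,2) show ?thesis unfolding inv_def C'_def by simp
  qed
  have "inv i" for i
  proof (induction i)
    case 0
    have "\<sigma> [] = {}" using leg unfolding legal_cop_strategy_def by blast
    then show ?case using f0 ab unfolding inv_def by auto
  next
    case (Suc i)
    then show ?case using round by blast
  qed
  then have "thief_escapes V E \<sigma> f"
    using round f0 ab(2) unfolding thief_escapes_def by simp
  with caught show False by blast
qed

lemma cycl_le_if_cops_win:
  assumes g: "graph V E" and kc: "k_connected k V E" and win: "cops_win k V E"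
  shows "cycl V E \<le> k"
  using not_cops_win_if_cycl_gt[OF g kc] win by (meson not_le)

text \<open>Cops put a cop on every vertex Thief visits, so Thief can never revisit a vertex.\<close>

lemma cops_win_card:
  assumes g: "graph V E"
  shows "cops_win (card V) V E"
proof -
  define \<sigma> where "\<sigma> xs = set xs \<inter> V" for xs :: "'a list"
  have fin: "finite V" using g unfolding graph_def by blast
  have leg: "legal_cop_strategy (card V) V \<sigma>"
    unfolding legal_cop_strategy_def
  proof (intro conjI allI impI)
    fix xs v assume H: "v \<in> V \<and> v \<notin> \<sigma> xs"
    then have "card (\<sigma> xs) < card V" using fin unfolding \<sigma>_def by (intro psubset_card_mono) auto
    moreover have "\<sigma> (xs @ [v]) = insert v (\<sigma> xs)" using H unfolding \<sigma>_def by auto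
    ultimately show "cop_move (card V) v (\<sigma> xs) (\<sigma> (xs @ [v]))" unfolding cop_move_def by blast
  qed (simp add: \<sigma>_def)
  have "\<not> thief_escapes V E \<sigma> f" for f
  proof
    assume T: "thief_escapes V E \<sigma> f"
    have inV: "f i \<in> V" for i
    proof (cases i)
      case (Suc j)
      then show ?thesis using T g unfolding thief_escapes_def graph_def by blast
    qed (use T in \<open>simp add: thief_escapes_def\<close>)
    have fresh: "f j \<noteq> f i" if ji: "j < i" for i j
    proof -
      obtain i' where i: "i = Suc i'" using ji by (cases i) auto
      have "f j \<in> \<sigma> (map f [0..<Suc i'])"
        using ji i inV[of j] unfolding \<sigma>_def by (auto simp del: upt_Suc)
      then show ?thesis using T i unfolding thief_escapes_def by metis
    qed
    have "inj f" by (rule injI) (metis fresh linorder_neqE_nat)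
    moreover have "finite (range f)" using inV fin by (meson finite_subset image_subsetI)
    ultimately show False using finite_imageD by blast
  qed
  then show ?thesis using leg unfolding cops_win_def by blast
qed

lemma cops_win_ent:
  assumes "graph V E"
  shows "cops_win (ent V E) V E"
  unfolding ent_def by (rule LeastI_ex) (use cops_win_card[OF assms] in blast)

theorem mainTheorem8:
  fixes V :: "'a set" and E :: "'a \<Rightarrow> 'a \<Rightarrow> bool" and k :: nat
  assumes "k \<ge> 1"
    and "graph V E"
    and "k_connected k V E"
    and "card V \<ge> k + 1"
    and "ent V E = k"
  shows "cycl V E = ent V E \<and> ent V E = k"
proof -
  have "cops_win k V E" using cops_win_ent[OF assms(2)] assms(5) by simp
  then have "cycl V E \<le> k" using cycl_le_if_cops_win assms(2,3) by blast
  moreover have "k \<le> cycl V E" using k_connected_le_cycl assms(2,3) by blast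
  ultimately show ?thesis using assms(5) by simp
qed

end
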